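(* Let $(D,\theta)$ be a finite-dimensional division algebra with involution of the first kind over a field $F$, let $\lambda=\pm1$, and let $(V,h)$ be an even $\lambda$-hermitian space over $(D,\theta)$. Suppose that either $D\neq F$ or $\lambda\neq-1$. If $h$ is regular, then for every $F$-basis $\mathcal{B}$ of $\mathrm{Symd}_\lambda(D,\theta)$ the system of quadratic forms $q_{h,\mathcal{B}}$ is totally regular.
   Context: The field $F$ has arbitrary characteristic. An involution of the first kind on $D$ is an $F$-linear antiautomorphism of order $2$. $\mathrm{Symd}_\lambda(D,\theta)=\{x+\lambda\theta(x)\mid x\in D\}$. A $\lambda$-hermitian space $(V,h)$ consists of a finite-dimensional right $D$-vector space $V$ and a bi-additive map $h:V\times V\to D$ with $h(u\alpha,v\beta)=\theta(\alpha)h(u,v)\beta$ and $h(v,u)=\lambda\theta(h(u,v))$; $h$ is regular if no nonzero $v$ satisfies $h(v,w)=0$ for all $w\in V$, and even if $h(v,v)\in\mathrm{Symd}_\lambda(D,\theta)$ for all $v\in V$. For an $F$-basis $\mathcal{B}=\{u_1,\dots,u_n\}$ of $\mathrm{Symd}_\lambda(D,\theta)$ with dual basis $\pi_1,\dots,\pi_n$, $q_{h,\mathcal{B}}=(q^{u_1}_{h,\mathcal{B}},\dots,q^{u_n}_{h,\mathcal{B}}):V\to F^n$ with $q^{u_i}_{h,\mathcal{B}}(v)=\pi_i(h(v,v))$, where $V$ is viewed as an $F$-vector space; each component is a quadratic form over $F$. A quadratic form $q$ is regular if no nonzero $v$ satisfies $q(v+w)-q(v)-q(w)=0$ for all $w$;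 a system $(q_1,\dots,q_n)$ is totally regular if every $q_i$ is regular. *)

theory Defs
  imports Main
begin

text \<open>The base field F is modelled as a subfield Fs of the division ring D
  (type 'd) contained in the centre of D, i.e. D is an F-algebra.\<close>

definition central_subfield :: "'d::division_ring set \<Rightarrow> bool" where
  "central_subfield Fs \<longleftrightarrow>
     0 \<in> Fs \<and> 1 \<in> Fs \<and>
     (\<forall>a\<in>Fs. \<forall>b\<in>Fs. a + b \<in> Fs \<and> a * b \<in> Fs) \<and>
     (\<forall>a\<in>Fs. - a \<in> Fs \<and> inverse a \<in> Fs) \<and>
     (\<forall>a\<in>Fs. \<forall>x. a * x = x * a)"

definition findim_over :: "'d::division_ring set \<Rightarrow> bool" where
  "findim_over Fs \<longleftrightarrow>
     (\<exists>S. finite S \<and> (\<forall>x::'d. \<exists>c. (\<forall>s\<in>S. c s \<in> Fs) \<and> x = (\<Sum>s\<in>S. c s * s)))"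

definition involution_first_kind :: "'d::division_ring set \<Rightarrow> ('d \<Rightarrow> 'd) \<Rightarrow> bool" where
  "involution_first_kind Fs \<theta> \<longleftrightarrow>
     (\<forall>x y. \<theta> (x + y) = \<theta> x + \<theta> y) \<and>
     (\<forall>x y. \<theta> (x * y) = \<theta> y * \<theta> x) \<and>
     (\<forall>a\<in>Fs. \<forall>x. \<theta> (a * x) = a * \<theta> x) \<and>
     (\<forall>x. \<theta> (\<theta> x) = x)"

definition Symd :: "'d::division_ring \<Rightarrow> ('d \<Rightarrow> 'd) \<Rightarrow> 'd set" where
  "Symd lam \<theta> = {x + lam * \<theta> x | x. True}"

definition right_vector_space :: "('v::ab_group_add \<Rightarrow> 'd::division_ring \<Rightarrow> 'v) \<Rightarrow> bool" where
  "right_vector_space smul \<longleftrightarrow>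
     (\<forall>v w a. smul (v + w) a = smul v a + smul w a) \<and>
     (\<forall>v a b. smul v (a + b) = smul v a + smul v b) \<and>
     (\<forall>v a b. smul v (a * b) = smul (smul v a) b) \<and>
     (\<forall>v. smul v 1 = v)"

definition findim_right :: "('v::ab_group_add \<Rightarrow> 'd::division_ring \<Rightarrow> 'v) \<Rightarrow> bool" where
  "findim_right smul \<longleftrightarrow>
     (\<exists>S. finite S \<and> (\<forall>v::'v. \<exists>c. v = (\<Sum>s\<in>S. smul s (c s))))"

definition lambda_hermitian ::
  "('d::division_ring \<Rightarrow> 'd) \<Rightarrow> 'd \<Rightarrow> ('v::ab_group_add \<Rightarrow> 'd \<Rightarrow> 'v) \<Rightarrow> ('v \<Rightarrow> 'v \<Rightarrow> 'd) \<Rightarrow> bool" where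
  "lambda_hermitian \<theta> lam smul h \<longleftrightarrow>
     (\<forall>u u' v. h (u + u') v = h u v + h u' v) \<and>
     (\<forall>u v v'. h u (v + v') = h u v + h u v') \<and>
     (\<forall>u v \<alpha> \<beta>. h (smul u \<alpha>) (smul v \<beta>) = \<theta> \<alpha> * h u v * \<beta>) \<and>
     (\<forall>u v. h v u = lam * \<theta> (h u v))"

definition herm_regular :: "('v::zero \<Rightarrow> 'v \<Rightarrow> 'd::zero) \<Rightarrow> bool" where
  "herm_regular h \<longleftrightarrow> (\<forall>v. (\<forall>w. h v w = 0) \<longrightarrow> v = 0)"

definition herm_even :: "('d::division_ring \<Rightarrow> 'd) \<Rightarrow> 'd \<Rightarrow> ('v \<Rightarrow> 'v \<Rightarrow> 'd) \<Rightarrow> bool" where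
  "herm_even \<theta> lam h \<longleftrightarrow> (\<forall>v. h v v \<in> Symd lam \<theta>)"

definition is_F_basis :: "'d::division_ring set \<Rightarrow> 'd set \<Rightarrow> 'd list \<Rightarrow> bool" where
  "is_F_basis Fs W us \<longleftrightarrow>
     set us \<subseteq> W \<and>
     (\<forall>c. (\<forall>i<length us. c i \<in> Fs) \<and> (\<Sum>i<length us. c i * us ! i) = 0
          \<longrightarrow> (\<forall>i<length us. c i = 0)) \<and>
     (\<forall>x\<in>W. \<exists>c. (\<forall>i<length us. c i \<in> Fs) \<and> x = (\<Sum>i<length us. c i * us ! i))"

definition is_dual_basis :: "'d::division_ring set \<Rightarrow> 'd set \<Rightarrow> 'd list \<Rightarrow> (nat \<Rightarrow> 'd \<Rightarrow> 'd) \<Rightarrow> bool" where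
  "is_dual_basis Fs W us \<pi> \<longleftrightarrow>
     (\<forall>x\<in>W. (\<forall>i<length us. \<pi> i x \<in> Fs) \<and> x = (\<Sum>i<length us. \<pi> i x * us ! i))"

definition q_comp :: "(nat \<Rightarrow> 'd \<Rightarrow> 'd) \<Rightarrow> ('v \<Rightarrow> 'v \<Rightarrow> 'd) \<Rightarrow> nat \<Rightarrow> 'v \<Rightarrow> 'd" where
  "q_comp \<pi> h i v = \<pi> i (h v v)"

definition quad_regular :: "('v::ab_group_add \<Rightarrow> 'd::ab_group_add) \<Rightarrow> bool" where
  "quad_regular q \<longleftrightarrow> (\<forall>v. (\<forall>w. q (v + w) - q v - q w = 0) \<longrightarrow> v = 0)"

definition totally_regular :: "nat \<Rightarrow> (nat \<Rightarrow> 'v::ab_group_add \<Rightarrow> 'd::ab_group_add) \<Rightarrow> bool" where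
  "totally_regular n qs \<longleftrightarrow> (\<forall>i<n. quad_regular (qs i))"

end

theory Submission
  imports Defs
begin

text \<open>The polar form of the \<open>i\<close>-th component of \<open>q\<^sub>h\<^sub>,\<^sub>B\<close> is
  \<open>(v, w) \<mapsto> \<pi>\<^sub>i (h v w + \<lambda> \<theta> (h v w))\<close>, because \<open>h\<close> is even and \<open>\<pi>\<^sub>i\<close> is additive on
  \<open>Symd\<^sub>\<lambda>\<close>. Write the basis vector \<open>u\<^sub>i\<close> as \<open>a + \<lambda> \<theta> a\<close>. For \<open>v \<noteq> 0\<close> regularity gives
  some \<open>w\<^sub>0\<close> with \<open>h v w\<^sub>0 \<noteq> 0\<close>, and rescaling \<open>w\<^sub>0\<close> on the right yields \<open>w\<close> with
  \<open>h v w = a\<close>; the polar form then takes the value \<open>\<pi>\<^sub>i u\<^sub>i = 1\<close> at \<open>(v, w)\<close>.\<close>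

lemma central_subfield_add:
  "central_subfield Fs \<Longrightarrow> a \<in> Fs \<Longrightarrow> b \<in> Fs \<Longrightarrow> a + b \<in> Fs"
  by (simp add: central_subfield_def)

lemma central_subfield_diff:
  "central_subfield Fs \<Longrightarrow> a \<in> Fs \<Longrightarrow> b \<in> Fs \<Longrightarrow> a - b \<in> Fs"
  by (metis central_subfield_def diff_conv_add_uminus)

lemma involution_first_kind_one:
  assumes "involution_first_kind Fs \<theta>"
  shows "\<theta> 1 = 1"
proof -
  have mult: "\<And>x y. \<theta> (x * y) = \<theta> y * \<theta> x" and invol: "\<And>x. \<theta> (\<theta> x) = x"
    using assms by (simp_all add: involution_first_kind_def)
  have "1 = \<theta> (\<theta> 1 * 1)" by (simp add: invol)
  also have "\<dots> = \<theta> 1" by (subst mult) (simp add: invol)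
  finally show ?thesis by simp
qed

lemma Symd_memI: "x + lam * \<theta> x \<in> Symd lam \<theta>"
  by (auto simp: Symd_def)

lemma Symd_add:
  assumes "involution_first_kind Fs \<theta>" "x \<in> Symd lam \<theta>" "y \<in> Symd lam \<theta>"
  shows "x + y \<in> Symd lam \<theta>"
proof -
  obtain a b where "x = a + lam * \<theta> a" "y = b + lam * \<theta> b"
    using assms(2,3) by (auto simp: Symd_def)
  moreover have "\<theta> (a + b) = \<theta> a + \<theta> b"
    using assms(1) by (simp add: involution_first_kind_def)
  ultimately have "x + y = (a + b) + lam * \<theta> (a + b)"
    by (simp add: algebra_simps)
  then show ?thesis by (simp add: Symd_memI)
qed

lemma dual_basis_coord_unique:
  assumes Fs: "central_subfield Fs"
    and B: "is_F_basis Fs W us" and P: "is_dual_basis Fs W us \<pi>"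
    and x: "x \<in> W" and c: "\<forall>j<length us. c j \<in> Fs"
    and xc: "x = (\<Sum>j<length us. c j * us ! j)"
    and i: "i < length us"
  shows "\<pi> i x = c i"
proof -
  define d where "d j = \<pi> j x - c j" for j
  have "\<forall>j<length us. d j \<in> Fs"
    using P x c central_subfield_diff[OF Fs] by (simp add: d_def is_dual_basis_def)
  moreover have "(\<Sum>j<length us. d j * us ! j) = 0"
    using P x xc by (simp add: d_def is_dual_basis_def left_diff_distrib sum_subtractf)
  ultimately have "d i = 0"
    using B i unfolding is_F_basis_def by blast
  then show ?thesis by (simp add: d_def)
qed

lemma dual_basis_add:
  assumes Fs: "central_subfield Fs"
    and B: "is_F_basis Fs W us" and P: "is_dual_basis Fs W us \<pi>"
    and "x \<in> W" "y \<in> W" "x + y \<in> W" "i < length us"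
  shows "\<pi> i (x + y) = \<pi> i x + \<pi> i y"
proof (rule dual_basis_coord_unique[where c = "\<lambda>j. \<pi> j x + \<pi> j y", OF Fs B P])
  show "\<forall>j<length us. \<pi> j x + \<pi> j y \<in> Fs"
    using assms central_subfield_add[OF Fs] by (simp add: is_dual_basis_def)
  show "x + y = (\<Sum>j<length us. (\<pi> j x + \<pi> j y) * us ! j)"
    using P assms by (simp add: is_dual_basis_def distrib_right sum.distrib)
qed (use assms in auto)

lemma dual_basis_basis_vector:
  assumes Fs: "central_subfield Fs"
    and B: "is_F_basis Fs W us" and P: "is_dual_basis Fs W us \<pi>"
    and i: "i < length us"
  shows "\<pi> i (us ! i) = 1"
proof -
  have "\<pi> i (us ! i) = (if i = i then 1 else 0)"
  proof (rule dual_basis_coord_unique[where c = "\<lambda>j. if j = i then 1 else 0", OF Fs B P])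
    show "us ! i \<in> W" using B i by (auto simp: is_F_basis_def)
    show "\<forall>j<length us. (if j = i then 1 else 0) \<in> Fs"
      using Fs by (simp add: central_subfield_def)
    have "(\<Sum>j<length us. (if j = i then 1 else 0) * us ! j)
            = (\<Sum>j<length us. if j = i then us ! j else 0)"
      by (rule sum.cong) auto
    then show "us ! i = (\<Sum>j<length us. (if j = i then 1 else 0) * us ! j)"
      using i by simp
  qed (use i in auto)
  then show ?thesis by simp
qed

lemma lambda_hermitian_scale_right:
  assumes "involution_first_kind Fs \<theta>" "right_vector_space smul"
    and "lambda_hermitian \<theta> lam smul h"
  shows "h v (smul w b) = h v w * b"
proof -
  have "h v (smul w b) = h (smul v 1) (smul w b)"
    using assms(2) by (simp add: right_vector_space_def)
  also have "\<dots> = \<theta> 1 * h v w * b"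
    using assms(3) unfolding lambda_hermitian_def by blast
  finally show ?thesis by (simp add: involution_first_kind_one[OF assms(1)])
qed

lemma lambda_hermitian_diag_add:
  assumes "lambda_hermitian \<theta> lam smul h"
  shows "h (v + w) (v + w) = (h v v + h w w) + (h v w + lam * \<theta> (h v w))"
proof -
  have add_left: "\<And>u u' v. h (u + u') v = h u v + h u' v"
    and add_right: "\<And>u v v'. h u (v + v') = h u v + h u v'"
    and sym: "h w v = lam * \<theta> (h v w)"
    using assms unfolding lambda_hermitian_def by blast+
  have "h (v + w) (v + w) = h v v + h w w + (h v w + h w v)"
    by (simp add: add_left add_right algebra_simps)
  with sym show ?thesis by simp
qed

lemma herm_regular_onto:
  assumes "involution_first_kind Fs \<theta>" "right_vector_space smul"
    and "lambda_hermitian \<theta> lam smul h" "herm_regular h" "v \<noteq> 0"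
  obtains w where "h v w = a"
proof -
  obtain w\<^sub>0 where w\<^sub>0: "h v w\<^sub>0 \<noteq> 0"
    using assms(4,5) by (auto simp: herm_regular_def)
  have "h v (smul w\<^sub>0 (inverse (h v w\<^sub>0) * a)) = a"
    using w\<^sub>0 by (simp add: lambda_hermitian_scale_right[OF assms(1-3)] mult.assoc [symmetric])
  then show ?thesis by (rule that)
qed

lemma q_comp_polar:
  assumes Fs: "central_subfield Fs" and inv: "involution_first_kind Fs \<theta>"
    and herm: "lambda_hermitian \<theta> lam smul h" and even: "herm_even \<theta> lam h"
    and B: "is_F_basis Fs (Symd lam \<theta>) us" and P: "is_dual_basis Fs (Symd lam \<theta>) us \<pi>"
    and i: "i < length us"
  shows "q_comp \<pi> h i (v + w) - q_comp \<pi> h i v - q_comp \<pi> h i w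
           = \<pi> i (h v w + lam * \<theta> (h v w))"
proof -
  have diag: "\<And>u. h u u \<in> Symd lam \<theta>"
    using even by (simp add: herm_even_def)
  note add = dual_basis_add[OF Fs B P _ _ _ i]
  have "\<pi> i (h (v + w) (v + w))
          = \<pi> i (h v v) + \<pi> i (h w w) + \<pi> i (h v w + lam * \<theta> (h v w))"
    unfolding lambda_hermitian_diag_add[OF herm]
    by (simp add: add Symd_add[OF inv] diag Symd_memI)
  then show ?thesis by (simp add: q_comp_def)
qed

theorem proposition4p1:
  fixes Fs :: "'d::division_ring set"
    and \<theta> :: "'d \<Rightarrow> 'd"
    and lam :: 'd
    and smul :: "'v::ab_group_add \<Rightarrow> 'd \<Rightarrow> 'v"
    and h :: "'v \<Rightarrow> 'v \<Rightarrow> 'd"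
  assumes "central_subfield Fs"
    and "findim_over Fs"
    and "involution_first_kind Fs \<theta>"
    and "lam = 1 \<or> lam = -1"
    and "right_vector_space smul"
    and "findim_right smul"
    and "lambda_hermitian \<theta> lam smul h"
    and "herm_even \<theta> lam h"
    and "Fs \<noteq> UNIV \<or> lam \<noteq> -1"
    and "herm_regular h"
  shows "\<forall>us \<pi>. is_F_basis Fs (Symd lam \<theta>) us \<and> is_dual_basis Fs (Symd lam \<theta>) us \<pi>
           \<longrightarrow> totally_regular (length us) (q_comp \<pi> h)"
proof (intro allI impI)
  fix us \<pi>
  assume "is_F_basis Fs (Symd lam \<theta>) us \<and> is_dual_basis Fs (Symd lam \<theta>) us \<pi>"
  then have B: "is_F_basis Fs (Symd lam \<theta>) us" and P: "is_dual_basis Fs (Symd lam \<theta>) us \<pi>"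
    by simp_all
  show "totally_regular (length us) (q_comp \<pi> h)"
    unfolding totally_regular_def quad_regular_def
  proof (intro allI impI)
    fix i v
    assume i: "i < length us"
      and polar_zero: "\<forall>w. q_comp \<pi> h i (v + w) - q_comp \<pi> h i v - q_comp \<pi> h i w = 0"
    show "v = 0"
    proof (rule ccontr)
      assume "v \<noteq> 0"
      have "us ! i \<in> Symd lam \<theta>"
        using B i by (auto simp: is_F_basis_def)
      then obtain a where a: "us ! i = a + lam * \<theta> a"
        by (auto simp: Symd_def)
      obtain w where "h v w = a"
        using herm_regular_onto[OF assms(3,5,7,10) \<open>v \<noteq> 0\<close>] .
      then have "q_comp \<pi> h i (v + w) - q_comp \<pi> h i v - q_comp \<pi> h i w = 1"
        using q_comp_polar[OF assms(1,3,7,8) B P i] dual_basis_basis_vector[OF assms(1) B P i] a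
        by simp
      with polar_zero show False by simp
    qed
  qed
qed

end
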